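(* Let $Q$ be a quiver without oriented cycles, $\mathbf D=k\tilde Q/\mathcal I$, $i$ a sink of $Q$, and $M$ a $\Delta$-filtered $\mathbf D$-module with $d_i=(\underline{\dim}_\Delta M)_i>0$. Then $M$ has a unique quotient module isomorphic to $\Delta(i)^{d_i}$ (i.e. a unique submodule $Y$ with $M/Y\cong\Delta(i)^{d_i}$), and this submodule $Y$ is $\Delta$-filtered.
   Context: $k$ is an algebraically closed field. $\tilde Q$ is the double of $Q$ (arrows $\alpha\in Q_1$ and $\alpha^*:t(\alpha)\to s(\alpha)$), paths composed right to left; $\mathcal I\subseteq k\tilde Q$ is generated by $\alpha^*\alpha-\sum_{\gamma\in Q_1,t(\gamma)=s(\alpha)}\gamma\gamma^*$ ($\alpha\in Q_1$) and $\beta^*\alpha$ ($\alpha\ne\beta\in Q_1$, $t(\alpha)=t(\beta)$). $\Delta(i)$ is the indecomposable projective $kQ$-module with top $L(i)$, a $\mathbf D$-module via $\mathbf D\to kQ$ (killing the $\alpha^*$). $\Delta$-filtered: has a filtration by submodules with successive quotients among the $\Delta(j)$ (equivalently, projective as a $kQ$-module). $\underline{\dim}_\Delta(M)_i$ is the multiplicity of $\Delta(i)$ in such a filtration. A sink is a vertex at which no arrow of $Q$ starts. *)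

theory Defs
  imports Main "HOL-Library.Function_Algebras"
begin

text \<open>A finite quiver Q: vertices = the finite type 'v, arrows = the finite type 'e,
  an arrow a goes from s a to t a.  Arrows of the double quiver are
  Inl a (= a) and Inr a (= a star, from t a to s a).\<close>

fun dsrc :: "('e \<Rightarrow> 'v) \<Rightarrow> ('e \<Rightarrow> 'v) \<Rightarrow> 'e + 'e \<Rightarrow> 'v" where
  "dsrc s t (Inl a) = s a"
| "dsrc s t (Inr a) = t a"

fun dtgt :: "('e \<Rightarrow> 'v) \<Rightarrow> ('e \<Rightarrow> 'v) \<Rightarrow> 'e + 'e \<Rightarrow> 'v" where
  "dtgt s t (Inl a) = t a"
| "dtgt s t (Inr a) = s a"

text \<open>A representation: a scalar multiplication on the ambient type 'm, a family of
  subspaces (vector spaces at the vertices) and the linear maps of the arrows of the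
  double quiver.\<close>

record ('v, 'e, 'k, 'm) rep =
  scl :: "'k \<Rightarrow> 'm \<Rightarrow> 'm"
  sp  :: "'v \<Rightarrow> 'm set"
  act :: "'e + 'e \<Rightarrow> 'm \<Rightarrow> 'm"

definition lin_on :: "('k \<Rightarrow> 'm \<Rightarrow> 'm) \<Rightarrow> ('k \<Rightarrow> 'n \<Rightarrow> 'n) \<Rightarrow> 'm set
    \<Rightarrow> ('m::ab_group_add \<Rightarrow> 'n::ab_group_add) \<Rightarrow> bool" where
  "lin_on sc1 sc2 A f \<longleftrightarrow>
     (\<forall>x\<in>A. \<forall>y\<in>A. f (x + y) = f x + f y) \<and> (\<forall>c. \<forall>x\<in>A. f (sc1 c x) = sc2 c (f x))"

definition closed_subspace :: "('k \<Rightarrow> 'm \<Rightarrow> 'm) \<Rightarrow> 'm::ab_group_add set \<Rightarrow> bool" where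
  "closed_subspace sc A \<longleftrightarrow> 0 \<in> A \<and> (\<forall>x\<in>A. \<forall>y\<in>A. x + y \<in> A) \<and> (\<forall>c. \<forall>x\<in>A. sc c x \<in> A)"

definition is_vs :: "('k::field \<Rightarrow> 'm \<Rightarrow> 'm) \<Rightarrow> 'm::ab_group_add set \<Rightarrow> bool" where
  "is_vs sc A \<longleftrightarrow> closed_subspace sc A \<and>
     (\<forall>x\<in>A. \<forall>y\<in>A. \<forall>c. sc c (x + y) = sc c x + sc c y) \<and>
     (\<forall>x\<in>A. \<forall>a b. sc (a + b) x = sc a x + sc b x) \<and>
     (\<forall>x\<in>A. \<forall>a b. sc (a * b) x = sc a (sc b x)) \<and>
     (\<forall>x\<in>A. sc 1 x = x)"

definition is_rep :: "('e \<Rightarrow> 'v) \<Rightarrow> ('e \<Rightarrow> 'v) \<Rightarrow> ('v, 'e, 'k::field, 'm::ab_group_add) rep \<Rightarrow> bool" where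
  "is_rep s t R \<longleftrightarrow> (\<forall>i. is_vs (scl R) (sp R i)) \<and>
     (\<forall>a. lin_on (scl R) (scl R) (sp R (dsrc s t a)) (act R a) \<and>
          act R a ` sp R (dsrc s t a) \<subseteq> sp R (dtgt s t a))"

text \<open>Modules over D = k Qtilde / I, i.e. representations of the double quiver satisfying
  the generating relations of I (paths composed right to left).\<close>

definition is_D_module :: "('e::finite \<Rightarrow> 'v) \<Rightarrow> ('e \<Rightarrow> 'v) \<Rightarrow> ('v, 'e, 'k::field, 'm::ab_group_add) rep \<Rightarrow> bool" where
  "is_D_module s t R \<longleftrightarrow> is_rep s t R \<and>
     (\<forall>a. \<forall>x\<in>sp R (s a). act R (Inr a) (act R (Inl a) x) =
            (\<Sum>g\<in>{g. t g = s a}. act R (Inl g) (act R (Inr g) x))) \<and>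
     (\<forall>a b. a \<noteq> b \<and> t a = t b \<longrightarrow> (\<forall>x\<in>sp R (s a). act R (Inr b) (act R (Inl a) x) = 0))"

definition is_subrep :: "('e \<Rightarrow> 'v) \<Rightarrow> ('e \<Rightarrow> 'v) \<Rightarrow> ('v, 'e, 'k, 'm::ab_group_add) rep \<Rightarrow> ('v \<Rightarrow> 'm set) \<Rightarrow> bool" where
  "is_subrep s t R U \<longleftrightarrow> (\<forall>i. U i \<subseteq> sp R i \<and> closed_subspace (scl R) (U i)) \<and>
     (\<forall>a. act R a ` U (dsrc s t a) \<subseteq> U (dtgt s t a))"

definition restrict :: "('v, 'e, 'k, 'm) rep \<Rightarrow> ('v \<Rightarrow> 'm set) \<Rightarrow> ('v, 'e, 'k, 'm) rep" where
  "restrict R U = R\<lparr>sp := U\<rparr>"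

definition is_hom :: "('e \<Rightarrow> 'v) \<Rightarrow> ('e \<Rightarrow> 'v) \<Rightarrow> ('v, 'e, 'k, 'm::ab_group_add) rep
    \<Rightarrow> ('v, 'e, 'k, 'n::ab_group_add) rep \<Rightarrow> ('v \<Rightarrow> 'm \<Rightarrow> 'n) \<Rightarrow> bool" where
  "is_hom s t R N f \<longleftrightarrow>
     (\<forall>i. lin_on (scl R) (scl N) (sp R i) (f i) \<and> f i ` sp R i \<subseteq> sp N i) \<and>
     (\<forall>a. \<forall>x\<in>sp R (dsrc s t a). f (dtgt s t a) (act R a x) = act N a (f (dsrc s t a) x))"

text \<open>quot_iso R Y N: R / Y is isomorphic to N, i.e. there is a surjective module
  homomorphism R \<rightarrow> N with kernel Y.\<close>

definition quot_iso :: "('e \<Rightarrow> 'v) \<Rightarrow> ('e \<Rightarrow> 'v) \<Rightarrow> ('v, 'e, 'k, 'm::ab_group_add) rep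
    \<Rightarrow> ('v \<Rightarrow> 'm set) \<Rightarrow> ('v, 'e, 'k, 'n::ab_group_add) rep \<Rightarrow> bool" where
  "quot_iso s t R Y N \<longleftrightarrow> (\<exists>f. is_hom s t R N f \<and>
     (\<forall>i. f i ` sp R i = sp N i \<and> {x \<in> sp R i. f i x = 0} = Y i))"

text \<open>Paths of Q as lists of arrows, last arrow first: qpath j l p means p is a path
  from j to l.\<close>

fun qpath :: "('e \<Rightarrow> 'v) \<Rightarrow> ('e \<Rightarrow> 'v) \<Rightarrow> 'v \<Rightarrow> 'v \<Rightarrow> 'e list \<Rightarrow> bool" where
  "qpath s t j l [] = (j = l)"
| "qpath s t j l (a # p) = (t a = l \<and> qpath s t j (s a) p)"

text \<open>Delta(j) = kQ e_j (basis: paths starting at j), viewed as D-module with the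
  starred arrows acting by zero.  Elements are finitely supported coefficient functions
  on paths.\<close>

definition Delta :: "('e \<Rightarrow> 'v) \<Rightarrow> ('e \<Rightarrow> 'v) \<Rightarrow> 'v \<Rightarrow> ('v, 'e, 'k::field, 'e list \<Rightarrow> 'k) rep" where
  "Delta s t j = \<lparr> scl = (\<lambda>c f p. c * f p),
     sp = (\<lambda>l. {f. \<forall>p. f p \<noteq> 0 \<longrightarrow> qpath s t j l p}),
     act = (\<lambda>a f. case a of
              Inl b \<Rightarrow> (\<lambda>q. case q of [] \<Rightarrow> 0 | c # p \<Rightarrow> (if c = b then f p else 0))
            | Inr b \<Rightarrow> 0) \<rparr>"

definition rep_pow :: "('v, 'e, 'k, 'm::ab_group_add) rep \<Rightarrow> nat \<Rightarrow> ('v, 'e, 'k, nat \<Rightarrow> 'm) rep" where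
  "rep_pow R d = \<lparr> scl = (\<lambda>c x n. if n < d then scl R c (x n) else 0),
     sp = (\<lambda>l. {x. \<forall>n. (n < d \<longrightarrow> x n \<in> sp R l) \<and> (d \<le> n \<longrightarrow> x n = 0)}),
     act = (\<lambda>a x n. if n < d then act R a (x n) else 0) \<rparr>"

definition delta_filtration :: "('e \<Rightarrow> 'v) \<Rightarrow> ('e \<Rightarrow> 'v) \<Rightarrow> ('v, 'e, 'k::field, 'm::ab_group_add) rep
    \<Rightarrow> nat \<Rightarrow> (nat \<Rightarrow> 'v \<Rightarrow> 'm set) \<Rightarrow> 'v list \<Rightarrow> bool" where
  "delta_filtration s t M n F js \<longleftrightarrow> length js = n \<and>
     (\<forall>k\<le>n. is_subrep s t M (F k)) \<and> (\<forall>i. F 0 i = {0}) \<and> F n = sp M \<and>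
     (\<forall>k<n. (\<forall>i. F k i \<subseteq> F (Suc k) i) \<and>
            quot_iso s t (restrict M (F (Suc k))) (F k) (Delta s t (js ! k)))"

definition delta_filtered :: "('e \<Rightarrow> 'v) \<Rightarrow> ('e \<Rightarrow> 'v) \<Rightarrow> ('v, 'e, 'k::field, 'm::ab_group_add) rep \<Rightarrow> bool" where
  "delta_filtered s t M \<longleftrightarrow> (\<exists>n F js. delta_filtration s t M n F js)"

text \<open>Multiplicity of Delta(i) in a (chosen) Delta-filtration of M.\<close>

definition dimDelta :: "('e \<Rightarrow> 'v) \<Rightarrow> ('e \<Rightarrow> 'v) \<Rightarrow> ('v, 'e, 'k::field, 'm::ab_group_add) rep \<Rightarrow> 'v \<Rightarrow> nat" where
  "dimDelta s t M i =
     (let (n, F, js) = (SOME (n, F, js). delta_filtration s t M n F js)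
      in length (filter (\<lambda>j. j = i) js))"

definition alg_closed_type :: "'k::field itself \<Rightarrow> bool" where
  "alg_closed_type _ \<longleftrightarrow>
     (\<forall>n>0. \<forall>c :: nat \<Rightarrow> 'k. \<exists>x. x ^ n + (\<Sum>m<n. c m * x ^ m) = 0)"

end

theory Submission
  imports Defs "Jordan_Normal_Form.Determinant"
begin

hide_const (open) FuncSet.restrict  (* clashes with the restriction of representations *)

text \<open>
  Let A be the set of arrows of Q ending at the sink i.  For a subrepresentation U of M let
  rad U \<subseteq> U i be the set of sums \<Sum>a\<in>A. a(x a) with x a \<in> U (s a): the part of U at i that
  is reached by arrows.  As i is a sink, Delta(i) is one-dimensional and concentrated at i,
  whereas for j \<noteq> i every element of Delta(j) at i is reached by arrows.  Walking along a
  Delta-filtration 0 = F 0 \<subseteq> ... \<subseteq> F n = M one shows by induction that F k i / rad (F k) is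
  isomorphic to k^c, where c counts the factors Delta(i) among the first k subquotients;
  so M i / rad M is isomorphic to k^d with d = (dim_Delta M)_i.

  Finally the submodule top_kernel, equal to rad M at i and to M elsewhere,
  satisfies M / top_kernel \<cong> Delta(i)^d (existence); every Y with M / Y \<cong> Delta(i)^d equals
  top_kernel (uniqueness); and intersecting a Delta-filtration of M with top_kernel and
  discarding repeated terms yields a Delta-filtration of top_kernel.
\<close>

section \<open>Vector spaces and linear maps\<close>

text \<open>Vector spaces are carrier sets A with a scalar multiplication sc (predicate is_vs), so
  the usual rules have to be derived relative to the carrier.\<close>

lemma vs_scl_distl: "is_vs sc A \<Longrightarrow> x \<in> A \<Longrightarrow> y \<in> A \<Longrightarrow> sc c (x + y) = sc c x + sc c y"
  by (simp add: is_vs_def)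

lemma vs_scl_distr: "is_vs sc A \<Longrightarrow> x \<in> A \<Longrightarrow> sc (a + b) x = sc a x + sc b x"
  by (simp add: is_vs_def)

lemma vs_scl_assoc: "is_vs sc A \<Longrightarrow> x \<in> A \<Longrightarrow> sc (a * b) x = sc a (sc b x)"
  by (simp add: is_vs_def)

lemma vs_scl_zero:
  assumes "is_vs sc A" "x \<in> A" shows "sc 0 x = 0"
  using vs_scl_distr[OF assms, of 0 0] by simp

lemma vs_scl_minus_one:
  assumes "is_vs sc A" "x \<in> A" shows "sc (-1) x = - x"
proof -
  have "sc (1 + -1) x = sc 1 x + sc (-1) x" using vs_scl_distr[OF assms] .
  then have "0 = x + sc (-1) x"
    using vs_scl_zero[OF assms] assms by (simp add: is_vs_def)
  then show ?thesis by (simp add: eq_neg_iff_add_eq_0 add.commute)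
qed

definition is_subspace :: "('k::field \<Rightarrow> 'm \<Rightarrow> 'm) \<Rightarrow> 'm::ab_group_add set \<Rightarrow> 'm set \<Rightarrow> bool" where
  "is_subspace sc V U \<longleftrightarrow> is_vs sc V \<and> U \<subseteq> V \<and> closed_subspace sc U"

lemma is_subspace_self: "is_vs sc V \<Longrightarrow> is_subspace sc V V"
  by (simp add: is_subspace_def is_vs_def)

lemma subspace_zero: "is_subspace sc V U \<Longrightarrow> 0 \<in> U"
  by (simp add: is_subspace_def closed_subspace_def)

lemma subspace_add: "is_subspace sc V U \<Longrightarrow> x \<in> U \<Longrightarrow> y \<in> U \<Longrightarrow> x + y \<in> U"
  by (simp add: is_subspace_def closed_subspace_def)

lemma subspace_scl: "is_subspace sc V U \<Longrightarrow> x \<in> U \<Longrightarrow> sc c x \<in> U"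
  by (simp add: is_subspace_def closed_subspace_def)

lemma subspace_subset: "is_subspace sc V U \<Longrightarrow> x \<in> U \<Longrightarrow> x \<in> V"
  by (auto simp: is_subspace_def)

lemma subspace_diff:
  assumes U: "is_subspace sc V U" and x: "x \<in> U" and y: "y \<in> U" shows "x - y \<in> U"
proof -
  have "sc (-1) y = - y"
    using U y by (intro vs_scl_minus_one[of sc V]) (auto simp: is_subspace_def)
  then show ?thesis using subspace_add[OF U x subspace_scl[OF U y, of "-1"]] by simp
qed

lemma subspace_sum:
  assumes U: "is_subspace sc V U" and "finite S" "\<And>a. a \<in> S \<Longrightarrow> f a \<in> U"
  shows "(\<Sum>a\<in>S. f a) \<in> U"
  using assms(2,3) by (induction S rule: finite_induct) (simp_all add: subspace_zero[OF U] subspace_add[OF U])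

lemma vs_scl_diff:
  assumes V: "is_vs sc V" and x: "x \<in> V" and y: "y \<in> V" shows "sc c (x - y) = sc c x - sc c y"
proof -
  have "x - y \<in> V" using subspace_diff[OF is_subspace_self[OF V] x y] .
  then have "sc c (x - y + y) = sc c (x - y) + sc c y" using vs_scl_distl[OF V _ y] by blast
  then show ?thesis by (simp add: eq_diff_eq)
qed

lemma vs_scl_sum:
  assumes V: "is_vs sc V" and "finite S" "\<And>a. a \<in> S \<Longrightarrow> f a \<in> V"
  shows "sc c (\<Sum>a\<in>S. f a) = (\<Sum>a\<in>S. sc c (f a))"
  using assms(2,3)
proof (induction S rule: finite_induct)
  case empty
  show ?case using vs_scl_distl[OF V, of 0 0] subspace_zero[OF is_subspace_self[OF V]] by simp
next
  case (insert x F)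
  have "(\<Sum>a\<in>F. f a) \<in> V" using subspace_sum[OF is_subspace_self[OF V] insert(1)] insert(4) by blast
  then show ?case using insert vs_scl_distl[OF V] by simp
qed

lemma lin_add: "lin_on sc1 sc2 A f \<Longrightarrow> x \<in> A \<Longrightarrow> y \<in> A \<Longrightarrow> f (x + y) = f x + f y"
  by (simp add: lin_on_def)

lemma lin_scl: "lin_on sc1 sc2 A f \<Longrightarrow> x \<in> A \<Longrightarrow> f (sc1 c x) = sc2 c (f x)"
  by (simp add: lin_on_def)

lemma lin_on_subset: "lin_on sc1 sc2 A f \<Longrightarrow> B \<subseteq> A \<Longrightarrow> lin_on sc1 sc2 B f"
  unfolding lin_on_def by blast

lemma lin_zero: "lin_on sc1 sc2 A f \<Longrightarrow> 0 \<in> A \<Longrightarrow> f 0 = 0"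
  using lin_add[of sc1 sc2 A f 0 0] by simp

lemma lin_diff:
  assumes f: "lin_on sc1 sc2 A f" and A: "is_subspace sc1 V A" and x: "x \<in> A" and y: "y \<in> A"
  shows "f (x - y) = f x - f y"
proof -
  have "f (x - y + y) = f (x - y) + f y" using lin_add[OF f subspace_diff[OF A x y] y] .
  then show ?thesis by (simp add: eq_diff_eq)
qed

lemma lin_sum:
  assumes f: "lin_on sc1 sc2 A f" and A: "is_subspace sc1 V A" and "finite S" "\<And>a. a \<in> S \<Longrightarrow> g a \<in> A"
  shows "f (\<Sum>a\<in>S. g a) = (\<Sum>a\<in>S. f (g a))"
  using assms(3,4)
proof (induction S rule: finite_induct)
  case empty then show ?case using lin_zero[OF f subspace_zero[OF A]] by simp
next
  case (insert x F)
  have "(\<Sum>a\<in>F. g a) \<in> A" using subspace_sum[OF A insert(1)] insert(4) by blast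
  then show ?case using insert lin_add[OF f] by simp
qed

lemma sum_apply: "finite S \<Longrightarrow> (\<Sum>a\<in>S. f a) x = (\<Sum>a\<in>S. f a x)"
  by (induction S rule: finite_induct) auto

section \<open>Coordinate spaces\<close>

abbreviation pscale :: "'k::times \<Rightarrow> ('a \<Rightarrow> 'k) \<Rightarrow> 'a \<Rightarrow> 'k" where
  "pscale \<equiv> \<lambda>c f x. c * f x"

text \<open>The coordinate space k^d, realised as the sequences vanishing from index d on.\<close>

definition coords :: "nat \<Rightarrow> (nat \<Rightarrow> 'k::zero) set" where
  "coords d = {v. \<forall>n\<ge>d. v n = 0}"

definition unit_coord :: "nat \<Rightarrow> nat \<Rightarrow> 'k::{zero,one}" where
  "unit_coord n = (\<lambda>l. if l = n then 1 else 0)"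

lemma coords_expansion:
  fixes v :: "nat \<Rightarrow> 'k::comm_ring_1"
  assumes "v \<in> coords d" shows "v = (\<lambda>m. \<Sum>n<d. v n * unit_coord n m)"
proof
  fix m show "v m = (\<Sum>n<d. v n * unit_coord n m)"
    using assms by (cases "m < d") (auto simp: coords_def unit_coord_def if_distrib cong: if_cong)
qed

lemma linear_on_coords_expansion:
  fixes T :: "(nat \<Rightarrow> 'k::field) \<Rightarrow> nat \<Rightarrow> 'k"
  assumes T: "lin_on pscale pscale (coords d) T" and v: "v \<in> coords d"
  shows "T v = (\<lambda>m. \<Sum>n<d. v n * T (unit_coord n) m)"
proof -
  have "T (\<lambda>m. \<Sum>n\<in>S. v n * unit_coord n m) = (\<lambda>m. \<Sum>n\<in>S. v n * T (unit_coord n) m)"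
    if "S \<subseteq> {..<d}" for S
  proof -
    have "finite S" using that finite_subset by blast
    then show ?thesis using that
    proof (induction S rule: finite_induct)
      case empty
      have "T 0 = 0" by (rule lin_zero[OF T]) (simp add: coords_def)
      then show ?case by (simp add: zero_fun_def)
    next
      case (insert n S)
      let ?e = "\<lambda>m. v n * unit_coord n m" and ?r = "\<lambda>m. \<Sum>k\<in>S. v k * unit_coord k m"
      have n: "n < d" and S: "S \<subseteq> {..<d}" using insert.prems by auto
      have e: "?e \<in> coords d" and u: "unit_coord n \<in> coords d"
        using n by (auto simp: coords_def unit_coord_def)
      have r: "?r \<in> coords d" using S by (auto simp: coords_def unit_coord_def intro!: sum.neutral)
      have "(\<lambda>m. \<Sum>k\<in>insert n S. v k * unit_coord k m) = ?e + ?r"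
        using insert.hyps by (simp add: fun_eq_iff)
      then have "T (\<lambda>m. \<Sum>k\<in>insert n S. v k * unit_coord k m) = T ?e + T ?r"
        using lin_add[OF T e r] by simp
      also have "T ?e = (\<lambda>m. v n * T (unit_coord n) m)" using lin_scl[OF T u, of "v n"] by simp
      finally show ?case using insert by (simp add: fun_eq_iff)
    qed
  qed
  from this[of "{..<d}"] show ?thesis using coords_expansion[OF v] by simp
qed

text \<open>A surjective linear endomorphism of k^d is injective: a right inverse of a square
  matrix is a left inverse.\<close>

lemma coords_surj_imp_inj:
  fixes T :: "(nat \<Rightarrow> 'k::field) \<Rightarrow> nat \<Rightarrow> 'k"
  assumes T: "lin_on pscale pscale (coords d) T" and onto: "T ` coords d = coords d"
    and u: "u \<in> coords d" and Tu: "T u = 0"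
  shows "u = 0"
proof -
  have "\<exists>b. n < d \<longrightarrow> b \<in> coords d \<and> T b = unit_coord n" for n
  proof (cases "n < d")
    case True
    then have "unit_coord n \<in> T ` coords d" using onto by (simp add: coords_def unit_coord_def)
    then show ?thesis by auto
  qed simp
  then obtain b where b: "\<And>n. n < d \<Longrightarrow> b n \<in> coords d \<and> T (b n) = unit_coord n" by metis
  define A where "A = mat d d (\<lambda>(m, n). T (unit_coord n) m)"
  define B where "B = mat d d (\<lambda>(m, n). b n m)"
  have A: "A \<in> carrier_mat d d" and B: "B \<in> carrier_mat d d" unfolding A_def B_def by auto
  have "A * B = 1\<^sub>m d"
  proof (rule eq_matI)
    fix m n assume mn: "m < dim_row (1\<^sub>m d)" "n < dim_col (1\<^sub>m d)"
    then have "(A * B) $$ (m, n) = (\<Sum>l<d. b n l * T (unit_coord l) m)"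
      unfolding A_def B_def
      by (auto simp: scalar_prod_def atLeast0LessThan mult.commute intro!: sum.cong)
    also have "\<dots> = T (b n) m" using linear_on_coords_expansion[OF T, of "b n"] b mn by simp
    also have "\<dots> = 1\<^sub>m d $$ (m, n)" using b[of n] mn by (auto simp: unit_coord_def)
    finally show "(A * B) $$ (m, n) = 1\<^sub>m d $$ (m, n)" .
  qed (auto simp: A_def B_def)
  then have BA: "B * A = 1\<^sub>m d" by (rule mat_mult_left_right_inverse[OF A B])
  define uv where "uv = vec d u"
  have "A *\<^sub>v uv = 0\<^sub>v d"
  proof (rule eq_vecI)
    fix m assume m: "m < dim_vec (0\<^sub>v d)"
    then have "(A *\<^sub>v uv) $ m = (\<Sum>n<d. u n * T (unit_coord n) m)"
      unfolding A_def uv_def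
      by (auto simp: scalar_prod_def atLeast0LessThan mult.commute intro!: sum.cong)
    also have "\<dots> = T u m" using linear_on_coords_expansion[OF T u] by simp
    finally show "(A *\<^sub>v uv) $ m = 0\<^sub>v d $ m" using Tu m by simp
  qed (simp add: A_def)
  then have "B *\<^sub>v (A *\<^sub>v uv) = 0\<^sub>v d" using B by (auto intro!: eq_vecI simp: scalar_prod_def)
  moreover have "B *\<^sub>v (A *\<^sub>v uv) = uv"
    using assoc_mult_mat_vec[OF B A, of uv] BA by (simp add: uv_def)
  ultimately have "u n = 0" if "n < d" for n
    using that unfolding uv_def by (metis index_vec index_zero_vec(1))
  then show ?thesis using u by (auto simp: coords_def fun_eq_iff) (metis not_le)
qed

section \<open>Coordinates on quotient spaces\<close>

text \<open>quot_coords sc A R d g: the linear map g maps A onto k^d with kernel R, i.e. it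
  identifies the quotient A / R with k^d.\<close>

definition quot_coords :: "('k::field \<Rightarrow> 'm \<Rightarrow> 'm) \<Rightarrow> 'm::ab_group_add set \<Rightarrow> 'm set \<Rightarrow> nat
    \<Rightarrow> ('m \<Rightarrow> nat \<Rightarrow> 'k) \<Rightarrow> bool" where
  "quot_coords sc A R d g \<longleftrightarrow>
     lin_on sc pscale A g \<and> g ` A = coords d \<and> (\<forall>x\<in>A. g x = 0 \<longleftrightarrow> x \<in> R)"

lemma quot_coordsD:
  assumes "quot_coords sc A R d g"
  shows "lin_on sc pscale A g" "\<And>x. x \<in> A \<Longrightarrow> g x \<in> coords d"
    "\<And>v. v \<in> coords d \<Longrightarrow> \<exists>x\<in>A. g x = v" "\<And>x. x \<in> A \<Longrightarrow> g x = 0 \<longleftrightarrow> x \<in> R"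
  using assms unfolding quot_coords_def by (blast, blast, metis imageE, blast)

text \<open>Second isomorphism theorem: if A1 = A0 + R1 and A0 \<inter> R1 \<subseteq> R0 \<subseteq> R1, then
  A1 / R1 \<cong> A0 / R0, so coordinates on A0 / R0 induce coordinates on A1 / R1.\<close>

lemma quot_coords_enlarge:
  fixes sc :: "'k::field \<Rightarrow> 'm::ab_group_add \<Rightarrow> 'm"
  assumes A0: "is_subspace sc V A0" and A1: "is_subspace sc V A1" and R1: "is_subspace sc V R1"
    and A01: "A0 \<subseteq> A1" and R01: "R0 \<subseteq> R1"
    and span: "\<And>y. y \<in> A1 \<Longrightarrow> \<exists>w\<in>A0. y - w \<in> R1"
    and meet: "A0 \<inter> R1 \<subseteq> R0"
    and g: "quot_coords sc A0 R0 d g"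
  shows "\<exists>g'. quot_coords sc A1 R1 d g'"
proof -
  have V: "is_vs sc V" using A0 by (simp add: is_subspace_def)
  note glin = quot_coordsD(1)[OF g] and gin = quot_coordsD(2)[OF g]
    and gonto = quot_coordsD(3)[OF g] and gker = quot_coordsD(4)[OF g]
  define W where "W y = (SOME w. w \<in> A0 \<and> y - w \<in> R1)" for y
  have W: "W y \<in> A0" "y - W y \<in> R1" if y: "y \<in> A1" for y
  proof -
    obtain w where "w \<in> A0 \<and> y - w \<in> R1" using span[OF y] by blast
    then have "W y \<in> A0 \<and> y - W y \<in> R1"
      unfolding W_def by (rule someI[where P = "\<lambda>w. w \<in> A0 \<and> y - w \<in> R1"])
    then show "W y \<in> A0" "y - W y \<in> R1" by blast+
  qed
  text \<open>Modulo R0 the choice of the representative W y does not matter.\<close>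
  have gW: "g (W y) = g w" if y: "y \<in> A1" and w: "w \<in> A0" "y - w \<in> R1" for y w
  proof -
    have "W y - w = (y - w) - (y - W y)" by simp
    then have "W y - w \<in> R1" using subspace_diff[OF R1 w(2) W(2)[OF y]] by simp
    moreover have "W y - w \<in> A0" using subspace_diff[OF A0 W(1)[OF y] w(1)] .
    ultimately have "g (W y - w) = 0" using meet gker[of "W y - w"] by blast
    then show ?thesis using lin_diff[OF glin A0 W(1)[OF y] w(1)] by simp
  qed
  have "quot_coords sc A1 R1 d (\<lambda>y. g (W y))"
    unfolding quot_coords_def lin_on_def
  proof (intro conjI ballI allI)
    fix x y assume x: "x \<in> A1" and y: "y \<in> A1"
    have "W x + W y \<in> A0" using subspace_add[OF A0 W(1)[OF x] W(1)[OF y]] .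
    moreover have "(x + y) - (W x + W y) \<in> R1"
      using subspace_add[OF R1 W(2)[OF x] W(2)[OF y]] by (simp add: add_diff_add)
    ultimately have "g (W (x + y)) = g (W x + W y)" by (rule gW[OF subspace_add[OF A1 x y]])
    then show "g (W (x + y)) = g (W x) + g (W y)" using lin_add[OF glin W(1)[OF x] W(1)[OF y]] by simp
  next
    fix c x assume x: "x \<in> A1"
    have "sc c x - sc c (W x) = sc c (x - W x)"
      using vs_scl_diff[OF V subspace_subset[OF A1 x] subspace_subset[OF A0 W(1)[OF x]]] by simp
    then have "sc c x - sc c (W x) \<in> R1" using subspace_scl[OF R1 W(2)[OF x]] by simp
    then have "g (W (sc c x)) = g (sc c (W x))"
      by (rule gW[OF subspace_scl[OF A1 x] subspace_scl[OF A0 W(1)[OF x]]])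
    then show "g (W (sc c x)) = (\<lambda>n. c * g (W x) n)" using lin_scl[OF glin W(1)[OF x]] by simp
  next
    show "(\<lambda>y. g (W y)) ` A1 = coords d"
    proof
      show "(\<lambda>y. g (W y)) ` A1 \<subseteq> coords d" using gin[OF W(1)] by blast
      show "coords d \<subseteq> (\<lambda>y. g (W y)) ` A1"
      proof
        fix v :: "nat \<Rightarrow> 'k" assume "v \<in> coords d"
        then obtain x where x: "x \<in> A0" "g x = v" using gonto by blast
        have "x - x \<in> R1" using subspace_zero[OF R1] by simp
        then have "g (W x) = v" using gW[of x x] x A01 by auto
        then show "v \<in> (\<lambda>y. g (W y)) ` A1" using x A01 by blast
      qed
    qed
  next
    fix y assume y: "y \<in> A1"
    have "W y \<in> R1 \<longleftrightarrow> y \<in> R1"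
    proof
      assume "W y \<in> R1"
      from subspace_add[OF R1 W(2)[OF y] this] show "y \<in> R1" by simp
    next
      assume "y \<in> R1"
      from subspace_diff[OF R1 this W(2)[OF y]] show "W y \<in> R1" by simp
    qed
    moreover have "W y \<in> R0 \<longleftrightarrow> W y \<in> R1" using W(1)[OF y] meet R01 by blast
    ultimately show "g (W y) = 0 \<longleftrightarrow> y \<in> R1" using gker[OF W(1)[OF y]] by simp
  qed
  then show ?thesis by blast
qed

text \<open>Adjoining one dimension: if A0 is the kernel of a linear functional cf on A1 with
  cf v = 1, then A1 / R \<cong> A0 / R \<oplus> k, the new coordinate being cf and the old ones being
  read off the projection y - cf y \<cdot> v onto A0.\<close>

lemma quot_coords_extend:
  fixes sc :: "'k::field \<Rightarrow> 'm::ab_group_add \<Rightarrow> 'm"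
  assumes A0: "is_subspace sc V A0" and A1: "is_subspace sc V A1"
    and R: "R \<subseteq> A0" and A01: "A0 \<subseteq> A1"
    and cf: "lin_on sc (*) A1 cf" and v: "v \<in> A1" "cf v = 1"
    and ker: "\<And>x. x \<in> A1 \<Longrightarrow> cf x = 0 \<longleftrightarrow> x \<in> A0"
    and g: "quot_coords sc A0 R d g"
  shows "quot_coords sc A1 R (Suc d) (\<lambda>y. (g (y - sc (cf y) v))(d := cf y))"
proof -
  have V: "is_vs sc V" using A0 by (simp add: is_subspace_def)
  note glin = quot_coordsD(1)[OF g] and gin = quot_coordsD(2)[OF g]
    and gonto = quot_coordsD(3)[OF g] and gker = quot_coordsD(4)[OF g]
  have vV: "v \<in> V" using subspace_subset[OF A1 v(1)] .
  have sv: "sc c v \<in> A1" for c using subspace_scl[OF A1 v(1)] .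
  let ?p = "\<lambda>y. y - sc (cf y) v"
  have p: "?p y \<in> A0" if y: "y \<in> A1" for y
  proof -
    have "cf (?p y) = cf y - cf y * cf v" using lin_diff[OF cf A1 y sv] lin_scl[OF cf v(1)] by simp
    then show ?thesis using ker[OF subspace_diff[OF A1 y sv]] v(2) by simp
  qed
  have p_add: "?p (x + y) = ?p x + ?p y" if "x \<in> A1" "y \<in> A1" for x y
    using lin_add[OF cf that] vs_scl_distr[OF V vV] by (simp add: algebra_simps)
  have p_scl: "?p (sc c x) = sc c (?p x)" if x: "x \<in> A1" for c x
  proof -
    have "sc (cf (sc c x)) v = sc c (sc (cf x) v)"
      using lin_scl[OF cf x] vs_scl_assoc[OF V vV] by simp
    then show ?thesis
      using vs_scl_diff[OF V subspace_subset[OF A1 x] subspace_subset[OF A1 sv]] by simp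
  qed
  have p_A0: "?p x = x" if "x \<in> A0" for x
  proof -
    have "cf x = 0" using ker that A01 by blast
    then show ?thesis by (simp add: vs_scl_zero[OF V vV])
  qed
  show ?thesis
    unfolding quot_coords_def lin_on_def
  proof (intro conjI ballI allI)
    fix x y assume x: "x \<in> A1" and y: "y \<in> A1"
    have "g (?p (x + y)) = g (?p x) + g (?p y)"
      unfolding p_add[OF x y] by (rule lin_add[OF glin p[OF x] p[OF y]])
    then show "(g (?p (x + y)))(d := cf (x + y)) = (g (?p x))(d := cf x) + (g (?p y))(d := cf y)"
      using lin_add[OF cf x y] by (simp add: fun_eq_iff)
  next
    fix c x assume x: "x \<in> A1"
    show "(g (?p (sc c x)))(d := cf (sc c x)) = (\<lambda>n. c * ((g (?p x))(d := cf x)) n)"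
      using p_scl[OF x] lin_scl[OF glin p[OF x]] lin_scl[OF cf x] by (simp add: fun_eq_iff)
  next
    show "(\<lambda>y. (g (?p y))(d := cf y)) ` A1 = coords (Suc d)"
    proof
      show "(\<lambda>y. (g (?p y))(d := cf y)) ` A1 \<subseteq> coords (Suc d)"
        using gin[OF p] by (fastforce simp: coords_def)
      show "coords (Suc d) \<subseteq> (\<lambda>y. (g (?p y))(d := cf y)) ` A1"
      proof
        fix u :: "nat \<Rightarrow> 'k" assume u: "u \<in> coords (Suc d)"
        then have "u(d := 0) \<in> coords d" by (simp add: coords_def)
        then obtain x0 where x0: "x0 \<in> A0" "g x0 = u(d := 0)" using gonto by blast
        define y where "y = x0 + sc (u d) v"
        have x01: "x0 \<in> A1" using x0(1) A01 by blast
        have y: "y \<in> A1" unfolding y_def using subspace_add[OF A1 x01 sv] .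
        have "cf y = u d"
          unfolding y_def using lin_add[OF cf x01 sv] lin_scl[OF cf v(1)] ker[OF x01] x0(1) v(2) by simp
        then have "(g (?p y))(d := cf y) = u" unfolding y_def using x0 by (simp add: fun_eq_iff)
        then show "u \<in> (\<lambda>y. (g (?p y))(d := cf y)) ` A1" using y by blast
      qed
    qed
  next
    fix y assume y: "y \<in> A1"
    show "(g (?p y))(d := cf y) = 0 \<longleftrightarrow> y \<in> R"
    proof
      assume z: "(g (?p y))(d := cf y) = 0"
      then have "cf y = 0" by (metis fun_upd_same zero_fun_def)
      then have y0: "y \<in> A0" using ker[OF y] by blast
      have py: "?p y = y" using p_A0[OF y0] .
      have "g y d = 0" using gin[OF y0] by (simp add: coords_def)
      then have "g y = 0" using z py by (auto simp: fun_eq_iff split: if_splits)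
      then show "y \<in> R" using gker[OF y0] by blast
    next
      assume "y \<in> R"
      then have y0: "y \<in> A0" using R by blast
      then have "cf y = 0" "g y = 0" using ker A01 gker \<open>y \<in> R\<close> by blast+
      then show "(g (?p y))(d := cf y) = 0" using p_A0[OF y0] by (simp add: fun_eq_iff)
    qed
  qed
qed

text \<open>The induced map A / R \<rightarrow> A / Y is a surjective endomorphism of k^d,
  hence injective.\<close>

lemma quot_coords_kernel_unique:
  fixes sc :: "'k::field \<Rightarrow> 'm::ab_group_add \<Rightarrow> 'm"
  assumes A: "is_subspace sc V A" and Y: "Y \<subseteq> A" and RY: "R \<subseteq> Y"
    and g: "quot_coords sc A R d g" and h: "quot_coords sc A Y d h"
  shows "Y = R"
proof -
  note glin = quot_coordsD(1)[OF g] and gin = quot_coordsD(2)[OF g]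
    and gonto = quot_coordsD(3)[OF g] and gker = quot_coordsD(4)[OF g]
  note hlin = quot_coordsD(1)[OF h] and hin = quot_coordsD(2)[OF h]
    and honto = quot_coordsD(3)[OF h] and hker = quot_coordsD(4)[OF h]
  define pre where "pre u = (SOME x. x \<in> A \<and> g x = u)" for u
  have pre: "pre u \<in> A" "g (pre u) = u" if "u \<in> coords d" for u
  proof -
    obtain x where "x \<in> A \<and> g x = u" using gonto \<open>u \<in> coords d\<close> by blast
    then have "pre u \<in> A \<and> g (pre u) = u"
      unfolding pre_def by (rule someI[where P = "\<lambda>x. x \<in> A \<and> g x = u"])
    then show "pre u \<in> A" "g (pre u) = u" by blast+
  qed
  define T where "T u = h (pre u)" for u
  text \<open>T is well defined on A / R because the kernel of g lies in that of h.\<close>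
  have T_g: "T (g x) = h x" if x: "x \<in> A" for x
  proof -
    have gx: "g x \<in> coords d" using gin[OF x] .
    have d: "pre (g x) - x \<in> A" using subspace_diff[OF A pre(1)[OF gx] x] .
    have "g (pre (g x) - x) = 0" using lin_diff[OF glin A pre(1)[OF gx] x] pre(2)[OF gx] by simp
    then have "h (pre (g x) - x) = 0" using gker[OF d] RY hker[OF d] by blast
    then show ?thesis unfolding T_def using lin_diff[OF hlin A pre(1)[OF gx] x] by simp
  qed
  have T: "lin_on pscale pscale (coords d) T"
    unfolding lin_on_def
  proof (intro conjI ballI allI)
    fix u w :: "nat \<Rightarrow> 'k" assume u: "u \<in> coords d" and w: "w \<in> coords d"
    have s: "pre u + pre w \<in> A" using subspace_add[OF A pre(1)[OF u] pre(1)[OF w]] .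
    have "g (pre u + pre w) = u + w" using lin_add[OF glin pre(1)[OF u] pre(1)[OF w]] pre u w by simp
    then show "T (u + w) = T u + T w"
      using T_g[OF s] lin_add[OF hlin pre(1)[OF u] pre(1)[OF w]] unfolding T_def by simp
  next
    fix c :: 'k and u :: "nat \<Rightarrow> 'k" assume u: "u \<in> coords d"
    have s: "sc c (pre u) \<in> A" using subspace_scl[OF A pre(1)[OF u]] .
    have "g (sc c (pre u)) = (\<lambda>n. c * u n)" using lin_scl[OF glin pre(1)[OF u]] pre[OF u] by simp
    then show "T (\<lambda>n. c * u n) = (\<lambda>n. c * T u n)"
      using T_g[OF s] lin_scl[OF hlin pre(1)[OF u]] unfolding T_def by simp
  qed
  have T_onto: "T ` coords d = coords d"
  proof
    show "T ` coords d \<subseteq> coords d" using hin[OF pre(1)] unfolding T_def by blast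
    show "coords d \<subseteq> T ` coords d"
    proof
      fix w :: "nat \<Rightarrow> 'k" assume "w \<in> coords d"
      then obtain x where x: "x \<in> A" "h x = w" using honto by blast
      then have "T (g x) = w" using T_g by simp
      then show "w \<in> T ` coords d" using gin[OF x(1)] by blast
    qed
  qed
  have "y \<in> R" if y: "y \<in> Y" for y
  proof -
    have yA: "y \<in> A" using y Y by blast
    have "T (g y) = 0" using T_g[OF yA] hker[OF yA] y by simp
    then have "g y = 0" using coords_surj_imp_inj[OF T T_onto gin[OF yA]] by blast
    then show ?thesis using gker[OF yA] by blast
  qed
  then show ?thesis using RY by blast
qed

section \<open>The modules Delta(j) and their powers\<close>

lemma restrict_simps [simp]:
  "scl (restrict M U) = scl M" "sp (restrict M U) = U" "act (restrict M U) = act M"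
  "restrict (restrict M U) V = restrict M V"
  by (simp_all add: Defs.restrict_def)

lemma Delta_sp: "sp (Delta s t j) l = {f. \<forall>p. f p \<noteq> 0 \<longrightarrow> qpath s t j l p}"
  by (simp add: Delta_def)

lemma Delta_scl: "scl (Delta s t j) = pscale"
  by (simp add: Delta_def)

lemma Delta_Inl:
  "act (Delta s t j) (Inl a) h = (\<lambda>q. case q of [] \<Rightarrow> 0 | c # p \<Rightarrow> (if c = a then h p else 0))"
  by (simp add: Delta_def)

lemma Delta_Inr: "act (Delta s t j) (Inr a) h = 0"
  by (simp add: Delta_def)

lemma rep_pow_scl: "scl (rep_pow R d) = (\<lambda>c x n. if n < d then scl R c (x n) else 0)"
  by (simp add: rep_pow_def)

lemma rep_pow_sp: "sp (rep_pow R d) l = {x. \<forall>n. (n < d \<longrightarrow> x n \<in> sp R l) \<and> (d \<le> n \<longrightarrow> x n = 0)}"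
  by (simp add: rep_pow_def)

lemma rep_pow_act: "act (rep_pow R d) a x = (\<lambda>n. if n < d then act R a (x n) else 0)"
  by (simp add: rep_pow_def)

lemma qpath_from_sink:
  assumes sink: "\<forall>a. s a \<noteq> i" and p: "qpath s t i l p" shows "p = [] \<and> l = i"
  using p
proof (induction p arbitrary: l)
  case (Cons a p)
  then have "s a = i" by simp
  then show ?case using sink by blast
qed simp

lemma Delta_sink_other:
  fixes s t :: "'e \<Rightarrow> 'v"
  assumes "\<forall>a. s a \<noteq> i" "l \<noteq> i"
  shows "sp (Delta s t i :: ('v, 'e, 'k::field, 'e list \<Rightarrow> 'k) rep) l = {0}"
proof -
  have "f = 0" if "\<forall>p. f p \<noteq> 0 \<longrightarrow> qpath s t i l p" for f :: "'e list \<Rightarrow> 'k"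
    using that qpath_from_sink[OF assms(1)] assms(2) by fastforce
  then show ?thesis unfolding Delta_sp by auto
qed

lemma Delta_sink: "\<forall>a. s a \<noteq> i \<Longrightarrow> sp (Delta s t i) i = {h. \<forall>p. h p \<noteq> 0 \<longrightarrow> p = []}"
  by (auto simp: Delta_sp dest: qpath_from_sink)

lemma pow_Delta_sink_other:
  fixes s t :: "'e \<Rightarrow> 'v"
  assumes "\<forall>a. s a \<noteq> i" "l \<noteq> i"
  shows "sp (rep_pow (Delta s t i :: ('v, 'e, 'k::field, 'e list \<Rightarrow> 'k) rep) d) l = {0}"
proof (intro equalityI subsetI)
  fix x assume "x \<in> sp (rep_pow (Delta s t i :: ('v, 'e, 'k, 'e list \<Rightarrow> 'k) rep) d) l"
  then have "x n = 0" for n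
    using Delta_sink_other[OF assms] by (cases "n < d") (auto simp: rep_pow_sp)
  then show "x \<in> {0}" by auto
qed (use Delta_sink_other[OF assms] in \<open>auto simp: rep_pow_sp\<close>)

lemma pow_Delta_sink:
  assumes "\<forall>a. s a \<noteq> i"
  shows "z \<in> sp (rep_pow (Delta s t i) d) i \<longleftrightarrow> (\<forall>n p. z n p \<noteq> 0 \<longrightarrow> n < d \<and> p = [])"
  unfolding rep_pow_sp Delta_sink[OF assms] by (auto simp: fun_eq_iff) (meson not_le)

lemma pow_Delta_Inl_zero: "act (rep_pow (Delta s t j) d) (Inl a) 0 = 0"
  by (auto simp: rep_pow_act Delta_Inl fun_eq_iff split: list.split)

lemma pow_Delta_Inr: "act (rep_pow (Delta s t j) d) (Inr a) x = 0"
  by (auto simp: rep_pow_act Delta_Inr fun_eq_iff)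

section \<open>Representations with a sink\<close>

text \<open>Throughout, M is a representation of the double quiver and i is a sink of Q.\<close>

locale sink_rep =
  fixes s t :: "'e::finite \<Rightarrow> 'v" and M :: "('v, 'e, 'k::field, 'm::ab_group_add) rep" and i :: 'v
  assumes rep: "is_rep s t M" and sink: "\<forall>a. s a \<noteq> i"
begin

lemma vs_M: "is_vs (scl M) (sp M l)"
  using rep by (simp add: is_rep_def)

lemma subspace_M: "is_subspace (scl M) (sp M l) (sp M l)"
  by (rule is_subspace_self[OF vs_M])

lemma lin_act: "lin_on (scl M) (scl M) (sp M (dsrc s t a)) (act M a)"
  using rep by (simp add: is_rep_def)

lemma act_in: "x \<in> sp M (dsrc s t a) \<Longrightarrow> act M a x \<in> sp M (dtgt s t a)"
  using rep by (auto simp: is_rep_def)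

lemma lin_arrow: "lin_on (scl M) (scl M) (sp M (s a)) (act M (Inl a))"
  using lin_act[of "Inl a"] by simp

lemma arrow_in: "x \<in> sp M (s a) \<Longrightarrow> act M (Inl a) x \<in> sp M (t a)"
  using act_in[of x "Inl a"] by simp

lemma arrow_zero: "act M (Inl a) 0 = 0"
  by (rule lin_zero[OF lin_arrow subspace_zero[OF subspace_M]])

lemma subrep_subspace: "is_subrep s t M U \<Longrightarrow> is_subspace (scl M) (sp M l) (U l)"
  by (simp add: is_subrep_def is_subspace_def vs_M)

lemma subrep_subset: "is_subrep s t M U \<Longrightarrow> U l \<subseteq> sp M l"
  by (simp add: is_subrep_def)

lemma subrep_arrow: "is_subrep s t M U \<Longrightarrow> x \<in> U (s a) \<Longrightarrow> act M (Inl a) x \<in> U (t a)"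
  unfolding is_subrep_def by (metis dsrc.simps(1) dtgt.simps(1) image_subset_iff)

lemma subrep_full: "is_subrep s t M (sp M)"
  unfolding is_subrep_def using vs_M act_in by (auto simp: is_vs_def)

definition arrows_to_sink :: "'e set" where
  "arrows_to_sink = {a. t a = i}"

definition rad :: "('v \<Rightarrow> 'm set) \<Rightarrow> 'm set" where
  "rad U = {(\<Sum>a\<in>arrows_to_sink. act M (Inl a) (x a)) | x. \<forall>a\<in>arrows_to_sink. x a \<in> U (s a)}"

lemma radE:
  assumes "r \<in> rad U"
  obtains x where "\<forall>a\<in>arrows_to_sink. x a \<in> U (s a)" "r = (\<Sum>a\<in>arrows_to_sink. act M (Inl a) (x a))"
  using assms unfolding rad_def by blast

lemma radI: "\<forall>a\<in>arrows_to_sink. x a \<in> U (s a) \<Longrightarrow> (\<Sum>a\<in>arrows_to_sink. act M (Inl a) (x a)) \<in> rad U"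
  unfolding rad_def by blast

lemma rad_subset:
  assumes U: "is_subrep s t M U" shows "rad U \<subseteq> U i"
proof
  fix r assume "r \<in> rad U"
  then obtain x where x: "\<forall>a\<in>arrows_to_sink. x a \<in> U (s a)"
    and r: "r = (\<Sum>a\<in>arrows_to_sink. act M (Inl a) (x a))" by (rule radE)
  have "act M (Inl a) (x a) \<in> U i" if "a \<in> arrows_to_sink" for a
    using subrep_arrow[OF U, of "x a" a] x that by (simp add: arrows_to_sink_def)
  then show "r \<in> U i" unfolding r by (intro subspace_sum[OF subrep_subspace[OF U]]) auto
qed

lemma rad_subspace:
  assumes U: "is_subrep s t M U" shows "is_subspace (scl M) (sp M i) (rad U)"
proof -
  have S: "\<And>l. is_subspace (scl M) (sp M l) (U l)" using subrep_subspace[OF U] .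
  have "(\<Sum>a\<in>arrows_to_sink. act M (Inl a) 0) \<in> rad U"
    by (rule radI) (simp add: subspace_zero[OF S])
  then have zero: "0 \<in> rad U" by (simp add: arrow_zero)
  have add: "r1 + r2 \<in> rad U" if r: "r1 \<in> rad U" "r2 \<in> rad U" for r1 r2
  proof -
    obtain x where x: "\<forall>a\<in>arrows_to_sink. x a \<in> U (s a)"
      and r1: "r1 = (\<Sum>a\<in>arrows_to_sink. act M (Inl a) (x a))" using radE[OF r(1)] by blast
    obtain y where y: "\<forall>a\<in>arrows_to_sink. y a \<in> U (s a)"
      and r2: "r2 = (\<Sum>a\<in>arrows_to_sink. act M (Inl a) (y a))" using radE[OF r(2)] by blast
    have "(\<Sum>a\<in>arrows_to_sink. act M (Inl a) (x a + y a)) \<in> rad U"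
      by (rule radI) (use x y subspace_add[OF S] in auto)
    moreover have "act M (Inl a) (x a + y a) = act M (Inl a) (x a) + act M (Inl a) (y a)"
      if "a \<in> arrows_to_sink" for a
      using lin_add[OF lin_arrow] x y that subspace_subset[OF S] by blast
    ultimately show ?thesis unfolding r1 r2 by (simp add: sum.distrib)
  qed
  have scl: "scl M c r \<in> rad U" if r: "r \<in> rad U" for c r
  proof -
    obtain x where x: "\<forall>a\<in>arrows_to_sink. x a \<in> U (s a)"
      and r: "r = (\<Sum>a\<in>arrows_to_sink. act M (Inl a) (x a))" using radE[OF r] by blast
    have in_M: "act M (Inl a) (x a) \<in> sp M i" if "a \<in> arrows_to_sink" for a
      using arrow_in[of "x a" a] x that subspace_subset[OF S] by (auto simp: arrows_to_sink_def)
    have "(\<Sum>a\<in>arrows_to_sink. act M (Inl a) (scl M c (x a))) \<in> rad U"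
      by (rule radI) (use x subspace_scl[OF S] in auto)
    moreover have "act M (Inl a) (scl M c (x a)) = scl M c (act M (Inl a) (x a))"
      if "a \<in> arrows_to_sink" for a
      using lin_scl[OF lin_arrow] x that subspace_subset[OF S] by blast
    moreover have "scl M c r = (\<Sum>a\<in>arrows_to_sink. scl M c (act M (Inl a) (x a)))"
      unfolding r by (rule vs_scl_sum[OF vs_M[of i]]) (simp_all add: in_M)
    ultimately show ?thesis by simp
  qed
  show ?thesis unfolding is_subspace_def closed_subspace_def
    using zero add scl rad_subset[OF U] subrep_subset[OF U] vs_M by blast
qed

lemma rad_mono: "(\<And>l. U l \<subseteq> V l) \<Longrightarrow> rad U \<subseteq> rad V"
  unfolding rad_def by blast

lemma rad_cong:
  assumes "\<And>l. l \<noteq> i \<Longrightarrow> U l = V l" shows "rad U = rad V"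
proof -
  have "U (s a) = V (s a)" for a using assms sink by blast
  then show ?thesis unfolding rad_def by simp
qed

lemma arrow_in_rad:
  assumes U: "is_subrep s t M U" and b: "b \<in> arrows_to_sink" and x: "x \<in> U (s b)"
  shows "act M (Inl b) x \<in> rad U"
proof -
  have "(\<Sum>a\<in>arrows_to_sink. act M (Inl a) (if a = b then x else 0)) \<in> rad U"
    by (rule radI) (use x subspace_zero[OF subrep_subspace[OF U]] in auto)
  moreover have "(\<Sum>a\<in>arrows_to_sink. act M (Inl a) (if a = b then x else 0)) =
      (\<Sum>a\<in>arrows_to_sink. if a = b then act M (Inl b) x else 0)"
    by (rule sum.cong) (auto simp: arrow_zero)
  ultimately show ?thesis using b by simp
qed

definition top_kernel :: "'v \<Rightarrow> 'm set" where
  "top_kernel l = (if l = i then rad (sp M) else sp M l)"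

lemma top_kernel_subset: "top_kernel l \<subseteq> sp M l"
  unfolding top_kernel_def using rad_subset[OF subrep_full] by auto

lemma top_kernel_subrep: "is_subrep s t M top_kernel"
  unfolding is_subrep_def
proof (intro conjI allI)
  fix l
  show "top_kernel l \<subseteq> sp M l" by (rule top_kernel_subset)
  show "closed_subspace (scl M) (top_kernel l)" unfolding top_kernel_def
    using rad_subspace[OF subrep_full] vs_M by (auto simp: is_subspace_def is_vs_def)
next
  fix a
  have src: "top_kernel (s b) = sp M (s b)" for b
    using sink by (auto simp: top_kernel_def)
  show "act M a ` top_kernel (dsrc s t a) \<subseteq> top_kernel (dtgt s t a)"
  proof (cases a)
    case (Inl b)
    have "act M (Inl b) x \<in> top_kernel (t b)" if x: "x \<in> sp M (s b)" for x
    proof (cases "t b = i")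
      case True
      then show ?thesis using arrow_in_rad[OF subrep_full _ x] by (simp add: top_kernel_def arrows_to_sink_def)
    qed (use arrow_in[OF x] in \<open>simp add: top_kernel_def\<close>)
    then show ?thesis using src Inl by auto
  next
    case (Inr b)
    then show ?thesis using src act_in[of _ a] top_kernel_subset by fastforce
  qed
qed

end

section \<open>One step of a Delta-filtration\<close>

locale delta_step = sink_rep s t M i
  for s t :: "'e::finite \<Rightarrow> 'v" and M :: "('v, 'e, 'k::field, 'm::ab_group_add) rep" and i +
  fixes U0 U1 :: "'v \<Rightarrow> 'm set" and j :: 'v and \<phi> :: "'v \<Rightarrow> 'm \<Rightarrow> 'e list \<Rightarrow> 'k"
  assumes sub0: "is_subrep s t M U0" and sub1: "is_subrep s t M U1"
    and incl: "\<And>l. U0 l \<subseteq> U1 l"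
    and hom: "is_hom s t (restrict M U1) (Delta s t j) \<phi>"
    and img: "\<And>l. \<phi> l ` U1 l = sp (Delta s t j) l"
    and ker: "\<And>l. {x \<in> U1 l. \<phi> l x = 0} = U0 l"
begin

lemma S0: "is_subspace (scl M) (sp M l) (U0 l)" by (rule subrep_subspace[OF sub0])
lemma S1: "is_subspace (scl M) (sp M l) (U1 l)" by (rule subrep_subspace[OF sub1])

lemma phi_lin: "lin_on (scl M) pscale (U1 l) (\<phi> l)"
  using hom by (simp add: is_hom_def Delta_scl)

lemma phi_add: "x \<in> U1 l \<Longrightarrow> y \<in> U1 l \<Longrightarrow> \<phi> l (x + y) = \<phi> l x + \<phi> l y"
  by (rule lin_add[OF phi_lin])

lemma phi_scl: "x \<in> U1 l \<Longrightarrow> \<phi> l (scl M c x) = (\<lambda>p. c * \<phi> l x p)"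
  using lin_scl[OF phi_lin] by blast

lemma phi_diff: "x \<in> U1 l \<Longrightarrow> y \<in> U1 l \<Longrightarrow> \<phi> l (x - y) = \<phi> l x - \<phi> l y"
  by (rule lin_diff[OF phi_lin S1])

lemma phi_in: "x \<in> U1 l \<Longrightarrow> \<phi> l x \<in> sp (Delta s t j) l"
  using img by blast

lemma phi_surj: "h \<in> sp (Delta s t j) l \<Longrightarrow> \<exists>x\<in>U1 l. \<phi> l x = h"
  using img by (metis imageE)

lemma phi_ker: "x \<in> U1 l \<Longrightarrow> \<phi> l x = 0 \<longleftrightarrow> x \<in> U0 l"
  using ker by blast

lemma phi_arrow:
  assumes "x \<in> U1 (s a)"
  shows "\<phi> (t a) (act M (Inl a) x) = (\<lambda>q. case q of [] \<Rightarrow> 0 | c # p \<Rightarrow> (if c = a then \<phi> (s a) x p else 0))"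
proof -
  have "\<forall>x\<in>U1 (dsrc s t (Inl a)). \<phi> (dtgt s t (Inl a)) (act M (Inl a) x) =
      act (Delta s t j) (Inl a) (\<phi> (dsrc s t (Inl a)) x)"
    using hom unfolding is_hom_def restrict_simps by blast
  then have "\<phi> (t a) (act M (Inl a) x) = act (Delta s t j) (Inl a) (\<phi> (s a) x)"
    using assms by simp
  then show ?thesis by (simp add: Delta_Inl)
qed

lemma phi_rad:
  assumes x: "\<forall>a\<in>arrows_to_sink. x a \<in> U1 (s a)"
  shows "\<phi> i (\<Sum>a\<in>arrows_to_sink. act M (Inl a) (x a)) =
     (\<lambda>q. case q of [] \<Rightarrow> 0 | c # p \<Rightarrow> (if c \<in> arrows_to_sink then \<phi> (s c) (x c) p else 0))"
proof -
  have terms: "act M (Inl a) (x a) \<in> U1 i" if "a \<in> arrows_to_sink" for a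
    using subrep_arrow[OF sub1, of "x a" a] x that by (simp add: arrows_to_sink_def)
  have "\<phi> i (\<Sum>a\<in>arrows_to_sink. act M (Inl a) (x a)) = (\<Sum>a\<in>arrows_to_sink. \<phi> i (act M (Inl a) (x a)))"
    by (rule lin_sum[OF phi_lin S1 finite terms])
  also have "\<dots> = (\<Sum>a\<in>arrows_to_sink. (\<lambda>q. case q of [] \<Rightarrow> 0 | c # p \<Rightarrow> (if c = a then \<phi> (s a) (x a) p else 0)))"
    using phi_arrow x by (intro sum.cong) (auto simp: arrows_to_sink_def)
  also have "\<dots> = (\<lambda>q. case q of [] \<Rightarrow> 0 | c # p \<Rightarrow> (if c \<in> arrows_to_sink then \<phi> (s c) (x c) p else 0))"
  proof
    fix q
    show "(\<Sum>a\<in>arrows_to_sink. (\<lambda>q. case q of [] \<Rightarrow> 0 | c # p \<Rightarrow> (if c = a then \<phi> (s a) (x a) p else 0))) q =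
        (case q of [] \<Rightarrow> 0 | c # p \<Rightarrow> (if c \<in> arrows_to_sink then \<phi> (s c) (x c) p else 0))"
      by (cases q) (simp_all add: sum_apply)
  qed
  finally show ?thesis .
qed

text \<open>For j \<noteq> i every element of Delta(j) at i is a sum of paths through arrows into i,
  hence the image of an element of rad U1.\<close>

lemma rad_onto_Delta:
  assumes ji: "j \<noteq> i" and h: "h \<in> sp (Delta s t j) i"
  shows "\<exists>r\<in>rad U1. \<phi> i r = h"
proof -
  have hz: "\<And>p. h p \<noteq> 0 \<Longrightarrow> qpath s t j i p" using h by (simp add: Delta_sp)
  have "\<exists>y. a \<in> arrows_to_sink \<longrightarrow> y \<in> U1 (s a) \<and> \<phi> (s a) y = (\<lambda>p. h (a # p))" for a
  proof (cases "a \<in> arrows_to_sink")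
    case True
    have "qpath s t j (s a) p" if "h (a # p) \<noteq> 0" for p using hz[OF that] by simp
    then have "(\<lambda>p. h (a # p)) \<in> sp (Delta s t j) (s a)" by (simp add: Delta_sp)
    then show ?thesis using phi_surj by blast
  qed blast
  then obtain x where x: "\<And>a. a \<in> arrows_to_sink \<Longrightarrow> x a \<in> U1 (s a) \<and> \<phi> (s a) (x a) = (\<lambda>p. h (a # p))"
    using choice[of "\<lambda>a y. a \<in> arrows_to_sink \<longrightarrow> y \<in> U1 (s a) \<and> \<phi> (s a) y = (\<lambda>p. h (a # p))"] by blast
  have xin: "\<forall>a\<in>arrows_to_sink. x a \<in> U1 (s a)" using x by blast
  have "(\<lambda>q. case q of [] \<Rightarrow> 0 | c # p \<Rightarrow> (if c \<in> arrows_to_sink then \<phi> (s c) (x c) p else 0)) = h"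
  proof
    fix q show "(case q of [] \<Rightarrow> 0 | c # p \<Rightarrow> (if c \<in> arrows_to_sink then \<phi> (s c) (x c) p else 0)) = h q"
      using hz[of q] x ji by (cases q) (auto simp: arrows_to_sink_def)
  qed
  then have "\<phi> i (\<Sum>a\<in>arrows_to_sink. act M (Inl a) (x a)) = h" using phi_rad[OF xin] by simp
  then show ?thesis using radI[OF xin] by blast
qed

text \<open>An element of rad U1 lying in U0 already lies in rad U0: its components are killed by
  phi since the paths a # p are linearly independent.\<close>

lemma rad_meet: "U0 i \<inter> rad U1 \<subseteq> rad U0"
proof
  fix r assume r: "r \<in> U0 i \<inter> rad U1"
  then have "r \<in> rad U1" by blast
  then obtain x where x: "\<forall>a\<in>arrows_to_sink. x a \<in> U1 (s a)"
    and r_eq: "r = (\<Sum>a\<in>arrows_to_sink. act M (Inl a) (x a))" by (rule radE)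
  have "r \<in> U1 i" using r incl by blast
  then have "\<phi> i r = 0" using phi_ker r by blast
  then have z: "(\<lambda>q. case q of [] \<Rightarrow> 0 | c # p \<Rightarrow> (if c \<in> arrows_to_sink then \<phi> (s c) (x c) p else 0)) = 0"
    using phi_rad[OF x] r_eq by (simp add: zero_fun_def)
  have "x c \<in> U0 (s c)" if c: "c \<in> arrows_to_sink" for c
  proof -
    have "\<phi> (s c) (x c) = 0" using fun_cong[OF z, of "c # p" for p] c by (auto simp: fun_eq_iff)
    then show ?thesis using phi_ker[of "x c" "s c"] x c by blast
  qed
  then show "r \<in> rad U0" unfolding r_eq by (intro radI) blast
qed

lemma same_off_sink: assumes "j = i" "l \<noteq> i" shows "U1 l = U0 l"
proof -
  have "\<phi> l x = 0" if "x \<in> U1 l" for x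
    using phi_in[OF that] Delta_sink_other[OF sink assms(2), of t] assms(1) by auto
  then show ?thesis using ker[of l] by blast
qed

lemma same_rad: "j = i \<Longrightarrow> rad U1 = rad U0"
  by (rule rad_cong) (rule same_off_sink)

lemma phi_at_sink:
  assumes "j = i" "x \<in> U1 i" "p \<noteq> []" shows "\<phi> i x p = 0"
  using phi_in[OF assms(2)] Delta_sink[OF sink, of t] assms by auto

lemma step_other:
  assumes ji: "j \<noteq> i" and g: "quot_coords (scl M) (U0 i) (rad U0) d g"
  shows "\<exists>g'. quot_coords (scl M) (U1 i) (rad U1) d g'"
proof (rule quot_coords_enlarge[OF S0 S1 rad_subspace[OF sub1] incl rad_mono[OF incl] _ rad_meet g])
  fix y assume y: "y \<in> U1 i"
  obtain r where r: "r \<in> rad U1" "\<phi> i r = \<phi> i y" using rad_onto_Delta[OF ji phi_in[OF y]] by blast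
  have rU: "r \<in> U1 i" using r(1) rad_subset[OF sub1] by blast
  have "\<phi> i (y - r) = 0" using phi_diff[OF y rU] r(2) by simp
  then have "y - r \<in> U0 i" using phi_ker subspace_diff[OF S1 y rU] by blast
  then show "\<exists>w\<in>U0 i. y - w \<in> rad U1" using r(1) by (intro bexI[of _ "y - r"]) simp_all
qed

lemma step_same:
  assumes ji: "j = i" and g: "quot_coords (scl M) (U0 i) (rad U0) d g"
  shows "\<exists>g'. quot_coords (scl M) (U1 i) (rad U1) (Suc d) g'"
proof -
  let ?cf = "\<lambda>y. \<phi> i y []"
  have "(\<lambda>p. if p = [] then 1 else 0) \<in> sp (Delta s t j) i"
    unfolding ji Delta_sink[OF sink] by simp
  then obtain v where v: "v \<in> U1 i" "\<phi> i v = (\<lambda>p. if p = [] then 1 else 0)" using phi_surj by blast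
  have cf: "lin_on (scl M) (*) (U1 i) ?cf"
    unfolding lin_on_def using phi_add phi_scl by simp
  have cf_ker: "?cf x = 0 \<longleftrightarrow> x \<in> U0 i" if x: "x \<in> U1 i" for x
  proof -
    have "?cf x = 0 \<longleftrightarrow> \<phi> i x = 0"
    proof
      assume "?cf x = 0"
      then show "\<phi> i x = 0" using phi_at_sink[OF ji x] by (auto simp: fun_eq_iff) metis
    qed simp
    then show ?thesis using phi_ker[OF x] by simp
  qed
  have "quot_coords (scl M) (U1 i) (rad U0) (Suc d) (\<lambda>y. (g (y - scl M (?cf y) v))(d := ?cf y))"
    by (rule quot_coords_extend[OF S0 S1 rad_subset[OF sub0] incl cf v(1) _ cf_ker g]) (simp add: v(2))
  then show ?thesis using same_rad[OF ji] by auto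
qed

text \<open>Intersecting the step with the candidate submodule top_kernel: phi stays surjective
  unless it vanishes on U1 i \<inter> rad M, which can only happen for j = i.\<close>

lemma phi_onto_meet:
  assumes nz: "j \<noteq> i \<or> (\<exists>x\<in>U1 i \<inter> top_kernel i. \<phi> i x \<noteq> 0)"
  shows "\<phi> l ` (U1 l \<inter> top_kernel l) = sp (Delta s t j) l"
proof (intro equalityI subsetI)
  fix h :: "'e list \<Rightarrow> 'k" assume h: "h \<in> sp (Delta s t j) l"
  show "h \<in> \<phi> l ` (U1 l \<inter> top_kernel l)"
  proof (cases "l = i")
    case False
    then have "U1 l \<inter> top_kernel l = U1 l" using subrep_subset[OF sub1] by (auto simp: top_kernel_def)
    then show ?thesis using phi_surj[OF h] by auto
  next
    case li: True
    show ?thesis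
    proof (cases "j = i")
      case False
      obtain r where r: "r \<in> rad U1" "\<phi> i r = h" using rad_onto_Delta[OF False] h li by blast
      have "r \<in> U1 i" using r(1) rad_subset[OF sub1] by blast
      moreover have "rad U1 \<subseteq> rad (sp M)" by (rule rad_mono) (rule subrep_subset[OF sub1])
      then have "r \<in> top_kernel i" using r(1) by (auto simp: top_kernel_def)
      ultimately show ?thesis using r(2) li by blast
    next
      case ji: True
      then obtain x0 where x0: "x0 \<in> U1 i" "x0 \<in> top_kernel i" "\<phi> i x0 \<noteq> 0" using nz by blast
      define c0 where "c0 = \<phi> i x0 []"
      have c0: "c0 \<noteq> 0" using x0(3) phi_at_sink[OF ji x0(1)] by (auto simp: c0_def fun_eq_iff) metis
      have hf: "h p = 0" if "p \<noteq> []" for p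
        using h li ji that Delta_sink[OF sink, of t] by auto
      define x where "x = scl M (h [] / c0) x0"
      have "x \<in> U1 i \<inter> top_kernel i"
        unfolding x_def using subspace_scl[OF S1 x0(1)] subspace_scl[OF subrep_subspace[OF top_kernel_subrep] x0(2)] by blast
      moreover have "\<phi> i x = h"
      proof
        fix p
        have "\<phi> i x p = h [] / c0 * \<phi> i x0 p" unfolding x_def using phi_scl[OF x0(1)] by simp
        then show "\<phi> i x p = h p"
          using phi_at_sink[OF ji x0(1), of p] hf[of p] c0 by (cases "p = []") (simp_all add: c0_def)
      qed
      ultimately show ?thesis using li by blast
    qed
  qed
qed (auto intro: phi_in)

lemma step_meet_top_kernel:
  "quot_iso s t (restrict M (\<lambda>l. U1 l \<inter> top_kernel l)) (\<lambda>l. U0 l \<inter> top_kernel l) (Delta s t j)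
   \<or> (\<lambda>l. U1 l \<inter> top_kernel l) = (\<lambda>l. U0 l \<inter> top_kernel l)"
proof (cases "j \<noteq> i \<or> (\<exists>x\<in>U1 i \<inter> top_kernel i. \<phi> i x \<noteq> 0)")
  case True
  have "is_hom s t (restrict M (\<lambda>l. U1 l \<inter> top_kernel l)) (Delta s t j) \<phi>"
    unfolding is_hom_def restrict_simps
  proof (intro conjI allI ballI)
    fix l
    have "lin_on (scl M) (scl (Delta s t j)) (U1 l) (\<phi> l)" using hom by (simp add: is_hom_def)
    then show "lin_on (scl M) (scl (Delta s t j)) (U1 l \<inter> top_kernel l) (\<phi> l)"
      by (rule lin_on_subset) blast
    show "\<phi> l ` (U1 l \<inter> top_kernel l) \<subseteq> sp (Delta s t j) l" using phi_in by blast
  next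
    fix a x assume "x \<in> U1 (dsrc s t a) \<inter> top_kernel (dsrc s t a)"
    then show "\<phi> (dtgt s t a) (act M a x) = act (Delta s t j) a (\<phi> (dsrc s t a) x)"
      using hom unfolding is_hom_def by simp
  qed
  moreover have "{x \<in> U1 l \<inter> top_kernel l. \<phi> l x = 0} = U0 l \<inter> top_kernel l" for l
    using ker[of l] incl[of l] by blast
  ultimately have "quot_iso s t (restrict M (\<lambda>l. U1 l \<inter> top_kernel l)) (\<lambda>l. U0 l \<inter> top_kernel l)
      (Delta s t j)"
    using phi_onto_meet[OF True] unfolding quot_iso_def restrict_simps by blast
  then show ?thesis ..
next
  case False
  have "U1 l \<inter> top_kernel l = U0 l \<inter> top_kernel l" for l
  proof (cases "l = i")
    case True
    then show ?thesis using False phi_ker incl[of i] by blast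
  qed (use False same_off_sink in simp)
  then show ?thesis by blast
qed

end

section \<open>Delta-filtrations\<close>

lemma delta_filtrationD:
  assumes "delta_filtration s t M n F js"
  shows "length js = n" "\<And>k. k \<le> n \<Longrightarrow> is_subrep s t M (F k)" "F 0 = (\<lambda>l. {0})" "F n = sp M"
    "\<And>k l. k < n \<Longrightarrow> F k l \<subseteq> F (Suc k) l"
    "\<And>k. k < n \<Longrightarrow> quot_iso s t (restrict M (F (Suc k))) (F k) (Delta s t (js ! k))"
  using assms unfolding delta_filtration_def by auto

lemma dimDelta_filtration:
  assumes "delta_filtered s t M"
  obtains n F js where "delta_filtration s t M n F js"
    and "dimDelta s t M i = length (filter (\<lambda>j. j = i) js)"
proof -
  obtain n F js where nFjs: "(SOME (n, F, js). delta_filtration s t M n F js) = (n, F, js)"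
    by (metis prod_cases3)
  have "\<exists>x. (\<lambda>(n, F, js). delta_filtration s t M n F js) x"
    using assms unfolding delta_filtered_def by auto
  then have "(\<lambda>(n, F, js). delta_filtration s t M n F js) (SOME x. (\<lambda>(n, F, js). delta_filtration s t M n F js) x)"
    by (rule someI_ex)
  then have "delta_filtration s t M n F js" using nFjs by simp
  moreover have "dimDelta s t M i = length (filter (\<lambda>j. j = i) js)"
    unfolding dimDelta_def using nFjs by simp
  ultimately show ?thesis by (rule that)
qed

lemma subrep_restrict_mono:
  assumes G: "is_subrep s t (restrict M U) G" and U: "\<And>l. U l \<subseteq> U' l"
  shows "is_subrep s t (restrict M U') G"
proof -
  have "G l \<subseteq> U' l" for l using G U[of l] unfolding is_subrep_def by auto
  then show ?thesis using G unfolding is_subrep_def by simp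
qed

lemma subrep_restrict_self: "is_subrep s t M U \<Longrightarrow> is_subrep s t (restrict M U) U"
  unfolding is_subrep_def by simp

lemma subrep_inter:
  assumes U: "is_subrep s t M U" and V: "is_subrep s t M V"
  shows "is_subrep s t M (\<lambda>l. U l \<inter> V l)"
  unfolding is_subrep_def
proof (intro conjI allI)
  fix l
  show "U l \<inter> V l \<subseteq> sp M l" using U unfolding is_subrep_def by blast
  have "closed_subspace (scl M) (U l)" "closed_subspace (scl M) (V l)"
    using U V unfolding is_subrep_def by blast+
  then show "closed_subspace (scl M) (U l \<inter> V l)" unfolding closed_subspace_def by simp
next
  fix a
  have "act M a ` U (dsrc s t a) \<subseteq> U (dtgt s t a)" "act M a ` V (dsrc s t a) \<subseteq> V (dtgt s t a)"
    using U V unfolding is_subrep_def by blast+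
  then show "act M a ` (U (dsrc s t a) \<inter> V (dsrc s t a)) \<subseteq> U (dtgt s t a) \<inter> V (dtgt s t a)" by blast
qed

lemma extend_filtration:
  assumes F: "delta_filtration s t (restrict M U) m G js"
    and sub: "is_subrep s t M U'" and incl: "\<And>l. U l \<subseteq> U' l"
    and q: "quot_iso s t (restrict M U') U (Delta s t j)"
  shows "delta_filtration s t (restrict M U') (Suc m) (G(Suc m := U')) (js @ [j])"
proof -
  note G = delta_filtrationD[OF F]
  show ?thesis unfolding delta_filtration_def
  proof (intro conjI allI impI)
    fix k assume "k \<le> Suc m"
    then show "is_subrep s t (restrict M U') ((G(Suc m := U')) k)"
      using subrep_restrict_self[OF sub] subrep_restrict_mono[OF G(2) incl] by (cases "k = Suc m") auto
  next
    fix k l assume "k < Suc m"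
    then show "(G(Suc m := U')) k l \<subseteq> (G(Suc m := U')) (Suc k) l"
      using G(4,5) incl by (cases "k = m") auto
  next
    fix k assume "k < Suc m"
    then show "quot_iso s t (restrict (restrict M U') ((G(Suc m := U')) (Suc k))) ((G(Suc m := U')) k)
        (Delta s t ((js @ [j]) ! k))"
      using G(1,4,6) q by (cases "k = m") (auto simp: nth_append)
  qed (use G(1,3) in auto)
qed

context sink_rep
begin

lemma filtration_step:
  assumes F: "delta_filtration s t M n F js" and k: "k < n"
  shows "\<exists>\<phi>. delta_step s t M i (F k) (F (Suc k)) (js ! k) \<phi>"
proof -
  note F' = delta_filtrationD[OF F]
  obtain \<phi> where "is_hom s t (restrict M (F (Suc k))) (Delta s t (js ! k)) \<phi>"
    "\<forall>l. \<phi> l ` F (Suc k) l = sp (Delta s t (js ! k)) l \<and> {x \<in> F (Suc k) l. \<phi> l x = 0} = F k l"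
    using F'(6)[OF k] unfolding quot_iso_def by auto
  then have "delta_step s t M i (F k) (F (Suc k)) (js ! k) \<phi>"
    unfolding delta_step_def delta_step_axioms_def using sink_rep_axioms F'(2,5) k by auto
  then show ?thesis by blast
qed

lemma top_along_filtration:
  assumes F: "delta_filtration s t M n F js" and "k \<le> n"
  shows "\<exists>g. quot_coords (scl M) (F k i) (rad (F k)) (length (filter (\<lambda>j. j = i) (take k js))) g"
  using \<open>k \<le> n\<close>
proof (induction k)
  case 0
  have F0: "is_subrep s t M (F 0)" using delta_filtrationD(2)[OF F] by simp
  have "rad (F 0) = {0}"
    using rad_subset[OF F0] subspace_zero[OF rad_subspace[OF F0]] delta_filtrationD(3)[OF F] by auto
  then have "quot_coords (scl M) (F 0 i) (rad (F 0)) 0 (\<lambda>_. 0)"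
    using delta_filtrationD(3)[OF F] by (auto simp: quot_coords_def lin_on_def coords_def)
  then show ?case by auto
next
  case (Suc k)
  then obtain g where g: "quot_coords (scl M) (F k i) (rad (F k)) (length (filter (\<lambda>j. j = i) (take k js))) g"
    by auto
  have "k < n" using Suc.prems by simp
  then obtain \<phi> where "delta_step s t M i (F k) (F (Suc k)) (js ! k) \<phi>"
    using filtration_step[OF F] by blast
  then interpret step: delta_step s t M i "F k" "F (Suc k)" "js ! k" \<phi> .
  have "take (Suc k) js = take k js @ [js ! k]"
    using delta_filtrationD(1)[OF F] Suc.prems by (simp add: take_Suc_conv_app_nth)
  then show ?case using step.step_same[OF _ g] step.step_other[OF _ g] by (cases "js ! k = i") auto
qed

corollary top_coords:
  assumes F: "delta_filtration s t M n F js"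
  shows "\<exists>g. quot_coords (scl M) (sp M i) (rad (sp M)) (length (filter (\<lambda>j. j = i) js)) g"
  using top_along_filtration[OF F order_refl] delta_filtrationD(1,4)[OF F] by simp

text \<open>Intersecting a Delta-filtration of M with top_kernel and dropping the steps that become
  trivial gives a Delta-filtration of top_kernel.\<close>

lemma top_kernel_filtered:
  assumes F: "delta_filtration s t M n F js"
  shows "delta_filtered s t (restrict M top_kernel)"
proof -
  note F' = delta_filtrationD[OF F]
  have "\<exists>m G js'. delta_filtration s t (restrict M (\<lambda>l. F k l \<inter> top_kernel l)) m G js'" if "k \<le> n" for k
    using that
  proof (induction k)
    case 0
    let ?V = "\<lambda>l. F 0 l \<inter> top_kernel l"
    have V: "F 0 l \<inter> top_kernel l = {0}" for l
      using F'(3) subspace_zero[OF subrep_subspace[OF top_kernel_subrep]] by auto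
    have "is_subrep s t M ?V" using subrep_inter[OF F'(2) top_kernel_subrep] by simp
    then have "delta_filtration s t (restrict M ?V) 0 (\<lambda>_. ?V) []"
      unfolding delta_filtration_def using subrep_restrict_self V by simp
    then show ?case by blast
  next
    case (Suc k)
    then obtain m G js' where IH: "delta_filtration s t (restrict M (\<lambda>l. F k l \<inter> top_kernel l)) m G js'"
      by auto
    have "k < n" using Suc.prems by simp
    then obtain \<phi> where "delta_step s t M i (F k) (F (Suc k)) (js ! k) \<phi>"
      using filtration_step[OF F] by blast
    then interpret step: delta_step s t M i "F k" "F (Suc k)" "js ! k" \<phi> .
    have sub: "is_subrep s t M (\<lambda>l. F (Suc k) l \<inter> top_kernel l)"
      using subrep_inter[OF F'(2) top_kernel_subrep] Suc.prems by simp
    have incl: "F k l \<inter> top_kernel l \<subseteq> F (Suc k) l \<inter> top_kernel l" for l using step.incl by blast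
    from step.step_meet_top_kernel show ?case
    proof
      assume "quot_iso s t (restrict M (\<lambda>l. F (Suc k) l \<inter> top_kernel l)) (\<lambda>l. F k l \<inter> top_kernel l)
        (Delta s t (js ! k))"
      then show ?thesis using extend_filtration[OF IH sub incl] by blast
    next
      assume "(\<lambda>l. F (Suc k) l \<inter> top_kernel l) = (\<lambda>l. F k l \<inter> top_kernel l)"
      then show ?thesis using IH by auto
    qed
  qed
  from this[of n] obtain m G js' where "delta_filtration s t (restrict M (\<lambda>l. F n l \<inter> top_kernel l)) m G js'"
    by blast
  moreover have "(\<lambda>l. F n l \<inter> top_kernel l) = top_kernel" using F'(4) top_kernel_subset by auto
  ultimately show ?thesis unfolding delta_filtered_def by auto
qed

text \<open>Existence: coordinates g on M i / rad M define a surjection M \<rightarrow> Delta(i)^d with kernel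
  top_kernel, placing the coordinates on the trivial path at i.\<close>

definition top_map :: "nat \<Rightarrow> ('m \<Rightarrow> nat \<Rightarrow> 'k) \<Rightarrow> 'v \<Rightarrow> 'm \<Rightarrow> nat \<Rightarrow> 'e list \<Rightarrow> 'k" where
  "top_map d g l x = (if l = i then (\<lambda>n p. if n < d \<and> p = [] then g x n else 0) else 0)"

lemma top_map_hom:
  assumes g: "quot_coords (scl M) (sp M i) (rad (sp M)) d g"
  shows "is_hom s t M (rep_pow (Delta s t i) d) (top_map d g)"
  unfolding is_hom_def
proof (intro conjI allI ballI)
  note glin = quot_coordsD(1)[OF g] and gker = quot_coordsD(4)[OF g]
  fix l
  show "lin_on (scl M) (scl (rep_pow (Delta s t i) d)) (sp M l) (top_map d g l)"
    unfolding lin_on_def rep_pow_scl Delta_scl top_map_def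
    using lin_add[OF glin] lin_scl[OF glin] by (auto simp: fun_eq_iff)
  show "top_map d g l ` sp M l \<subseteq> sp (rep_pow (Delta s t i) d) l"
    by (auto simp: top_map_def pow_Delta_sink[OF sink] pow_Delta_sink_other[OF sink] fun_eq_iff)
next
  note gker = quot_coordsD(4)[OF g]
  fix a x assume x: "x \<in> sp M (dsrc s t a)"
  show "top_map d g (dtgt s t a) (act M a x) = act (rep_pow (Delta s t i) d) a (top_map d g (dsrc s t a) x)"
  proof (cases a)
    case (Inl b)
    have "top_map d g (t b) (act M (Inl b) x) = 0"
    proof (cases "t b = i")
      case True
      then have "act M (Inl b) x \<in> rad (sp M)" "act M (Inl b) x \<in> sp M i"
        using arrow_in_rad[OF subrep_full, of b x] arrow_in[of x b] x Inl by (auto simp: arrows_to_sink_def)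
      then show ?thesis using gker True by (auto simp: top_map_def fun_eq_iff)
    qed (simp add: top_map_def)
    then show ?thesis using Inl sink by (simp add: top_map_def pow_Delta_Inl_zero)
  next
    case (Inr b)
    then show ?thesis using sink by (simp add: top_map_def pow_Delta_Inr)
  qed
qed

lemma quotient_by_top_kernel:
  assumes g: "quot_coords (scl M) (sp M i) (rad (sp M)) d g"
  shows "quot_iso s t M top_kernel (rep_pow (Delta s t i) d)"
  unfolding quot_iso_def
proof (intro exI conjI allI)
  note gin = quot_coordsD(2)[OF g] and gonto = quot_coordsD(3)[OF g] and gker = quot_coordsD(4)[OF g]
  show "is_hom s t M (rep_pow (Delta s t i) d) (top_map d g)" by (rule top_map_hom[OF g])
  fix l
  show "top_map d g l ` sp M l = sp (rep_pow (Delta s t i) d) l"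
  proof (cases "l = i")
    case False
    then show ?thesis
      using subspace_zero[OF subspace_M] by (auto simp: top_map_def pow_Delta_sink_other[OF sink])
  next
    case True
    have "z \<in> top_map d g i ` sp M i" if z: "z \<in> sp (rep_pow (Delta s t i) d) i" for z
    proof -
      have "(\<lambda>n. if n < d then z n [] else 0) \<in> coords d" by (simp add: coords_def)
      then obtain x where x: "x \<in> sp M i" "g x = (\<lambda>n. if n < d then z n [] else 0)" using gonto by blast
      have zs: "n < d \<and> p = []" if "z n p \<noteq> 0" for n p using z that pow_Delta_sink[OF sink] by blast
      have "top_map d g i x = z"
      proof (intro ext)
        fix n p
        show "top_map d g i x n p = z n p"
          using x(2) zs[of n p] by (cases "n < d \<and> p = []") (auto simp: top_map_def)
      qed
      then show ?thesis using x(1) by blast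
    qed
    then show ?thesis using top_map_hom[OF g] True unfolding is_hom_def by blast
  qed
  have ker_i: "top_map d g i x = 0 \<longleftrightarrow> x \<in> rad (sp M)" if x: "x \<in> sp M i" for x
  proof -
    have "top_map d g i x = 0 \<longleftrightarrow> g x = 0"
      using gin[OF x] by (auto simp: top_map_def fun_eq_iff coords_def) (metis not_le)
    then show ?thesis using gker[OF x] by simp
  qed
  show "{x \<in> sp M l. top_map d g l x = 0} = top_kernel l"
  proof (cases "l = i")
    case True
    then show ?thesis using ker_i rad_subset[OF subrep_full] by (auto simp: top_kernel_def)
  qed (simp add: top_kernel_def top_map_def)
qed

text \<open>If M / Y \<cong> Delta(i)^d, then Y agrees with M away from the sink and contains
  rad M (arrows into i act by zero on Delta(i)^d); the coefficients at the trivial path give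
  coordinates on M i / Y i, so Y i = rad M by the dimension count.\<close>

lemma pow_quotient_off_sink:
  assumes q: "quot_iso s t M Y (rep_pow (Delta s t i) d)" and l: "l \<noteq> i" shows "Y l = sp M l"
proof -
  obtain f where "is_hom s t M (rep_pow (Delta s t i) d) f"
    and img: "\<And>l. f l ` sp M l = sp (rep_pow (Delta s t i) d) l"
    and ker: "\<And>l. {x \<in> sp M l. f l x = 0} = Y l"
    using q unfolding quot_iso_def by blast
  have "f l x = 0" if "x \<in> sp M l" for x
    using imageI[OF that, of "f l"] unfolding img pow_Delta_sink_other[OF sink l] by simp
  then show ?thesis using ker[of l] by blast
qed

lemma pow_quotient_rad:
  assumes q: "quot_iso s t M Y (rep_pow (Delta s t i) d)" shows "rad (sp M) \<subseteq> Y i"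
proof
  let ?N = "rep_pow (Delta s t i) d"
  obtain f where hom: "is_hom s t M ?N f" and img: "\<And>l. f l ` sp M l = sp ?N l"
    and ker: "\<And>l. {x \<in> sp M l. f l x = 0} = Y l"
    using q unfolding quot_iso_def by blast
  have lin: "lin_on (scl M) (scl ?N) (sp M i) (f i)" using hom unfolding is_hom_def by blast
  fix r assume "r \<in> rad (sp M)"
  then obtain x where x: "\<forall>a\<in>arrows_to_sink. x a \<in> sp M (s a)"
    and r: "r = (\<Sum>a\<in>arrows_to_sink. act M (Inl a) (x a))" by (rule radE)
  have terms: "act M (Inl a) (x a) \<in> sp M i" if "a \<in> arrows_to_sink" for a
    using arrow_in[of "x a" a] x that by (simp add: arrows_to_sink_def)
  have arrow_image: "f i (act M (Inl a) (x a)) = 0" if a: "a \<in> arrows_to_sink" for a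
  proof -
    have "f (t a) (act M (Inl a) (x a)) = act ?N (Inl a) (f (s a) (x a))"
      using hom x a unfolding is_hom_def by (metis dsrc.simps(1) dtgt.simps(1))
    moreover have "f (s a) (x a) = 0"
      using img[of "s a"] pow_Delta_sink_other[OF sink, of "s a"] x a sink by blast
    ultimately show ?thesis using a by (simp add: pow_Delta_Inl_zero arrows_to_sink_def)
  qed
  have "f i r = (\<Sum>a\<in>arrows_to_sink. f i (act M (Inl a) (x a)))"
    unfolding r by (rule lin_sum[OF lin subspace_M finite]) (rule terms)
  also have "\<dots> = 0" using arrow_image by simp
  finally have "f i r = 0" .
  moreover have "r \<in> sp M i" unfolding r by (rule subspace_sum[OF subspace_M]) (simp_all add: terms)
  ultimately show "r \<in> Y i" using ker[of i] by blast
qed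

lemma pow_quotient_coords:
  assumes q: "quot_iso s t M Y (rep_pow (Delta s t i) d)"
  shows "\<exists>h. quot_coords (scl M) (sp M i) (Y i) d h"
proof -
  let ?N = "rep_pow (Delta s t i) d"
  obtain f where hom: "is_hom s t M ?N f" and img: "\<And>l. f l ` sp M l = sp ?N l"
    and ker: "\<And>l. {x \<in> sp M l. f l x = 0} = Y l"
    using q unfolding quot_iso_def by blast
  have lin: "lin_on (scl M) (scl ?N) (sp M i) (f i)" using hom unfolding is_hom_def by blast
  have f_form: "f i x n p = 0" if "x \<in> sp M i" "\<not> (n < d \<and> p = [])" for x n p
    using img[of i] that pow_Delta_sink[OF sink] by blast
  define h where "h x = (\<lambda>n. if n < d then f i x n [] else 0)" for x
  have "quot_coords (scl M) (sp M i) (Y i) d h"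
    unfolding quot_coords_def lin_on_def
  proof (intro conjI ballI allI)
    fix x y assume "x \<in> sp M i" "y \<in> sp M i"
    then show "h (x + y) = h x + h y" using lin_add[OF lin] by (simp add: h_def fun_eq_iff)
  next
    fix c x assume "x \<in> sp M i"
    then show "h (scl M c x) = (\<lambda>n. c * h x n)"
      using lin_scl[OF lin] by (simp add: h_def fun_eq_iff rep_pow_scl Delta_scl)
  next
    show "h ` sp M i = coords d"
    proof (intro equalityI subsetI)
      fix w :: "nat \<Rightarrow> 'k" assume w: "w \<in> coords d"
      have "(\<lambda>n p. if n < d \<and> p = [] then w n else 0) \<in> sp ?N i"
        by (simp add: pow_Delta_sink[OF sink])
      then have "(\<lambda>n p. if n < d \<and> p = [] then w n else 0) \<in> f i ` sp M i" by (simp only: img)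
      then obtain x where x: "(\<lambda>n p. if n < d \<and> p = [] then w n else 0) = f i x" "x \<in> sp M i"
        by (rule imageE)
      have "h x = w" using x(1)[symmetric] w by (auto simp: h_def coords_def fun_eq_iff)
      then show "w \<in> h ` sp M i" using x(2) by blast
    qed (auto simp: h_def coords_def)
  next
    fix x assume x: "x \<in> sp M i"
    have "h x = 0 \<longleftrightarrow> f i x = 0"
    proof
      assume h0: "h x = 0"
      have "f i x n p = 0" for n p
      proof (cases "n < d \<and> p = []")
        case True
        then have "h x n = 0" using h0 by simp
        then show ?thesis using True by (simp add: h_def)
      qed (rule f_form[OF x])
      then show "f i x = 0" by (simp add: fun_eq_iff)
    qed (simp add: h_def fun_eq_iff)
    then show "h x = 0 \<longleftrightarrow> x \<in> Y i" using ker[of i] x by blast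
  qed
  then show ?thesis by blast
qed

lemma pow_quotient_unique:
  assumes Y: "is_subrep s t M Y" and q: "quot_iso s t M Y (rep_pow (Delta s t i) d)"
    and g: "quot_coords (scl M) (sp M i) (rad (sp M)) d g"
  shows "Y = top_kernel"
proof
  fix l
  show "Y l = top_kernel l"
  proof (cases "l = i")
    case True
    obtain h where h: "quot_coords (scl M) (sp M i) (Y i) d h" using pow_quotient_coords[OF q] by blast
    have "Y i = rad (sp M)"
      by (rule quot_coords_kernel_unique[OF subspace_M subrep_subset[OF Y] pow_quotient_rad[OF q] g h])
    then show ?thesis using True by (simp add: top_kernel_def)
  qed (simp add: pow_quotient_off_sink[OF q] top_kernel_def)
qed

end

theorem mainTheorem11:
  fixes s t :: "'e::finite \<Rightarrow> 'v::finite"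
    and M :: "('v, 'e, 'k::field, 'm::ab_group_add) rep"
    and i :: 'v
  assumes "alg_closed_type TYPE('k)"
    and "acyclic {(s a, t a) | a. True}"
    and "\<forall>a. s a \<noteq> i"
    and "is_D_module s t M"
    and "delta_filtered s t M"
    and "dimDelta s t M i > 0"
  shows "(\<exists>!Y. is_subrep s t M Y \<and>
                quot_iso s t M Y (rep_pow (Delta s t i) (dimDelta s t M i)))
       \<and> (\<forall>Y. is_subrep s t M Y \<and>
                quot_iso s t M Y (rep_pow (Delta s t i) (dimDelta s t M i))
              \<longrightarrow> delta_filtered s t (restrict M Y))"
proof -
  interpret sink_rep s t M i
    using assms(3,4) by unfold_locales (simp_all add: is_D_module_def)
  obtain n F js where F: "delta_filtration s t M n F js"
    and d: "dimDelta s t M i = length (filter (\<lambda>j. j = i) js)"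
    using dimDelta_filtration[OF assms(5)] by blast
  obtain g where g: "quot_coords (scl M) (sp M i) (rad (sp M)) (dimDelta s t M i) g"
    using top_coords[OF F] d by auto
  have unique: "Y = top_kernel"
    if "is_subrep s t M Y \<and> quot_iso s t M Y (rep_pow (Delta s t i) (dimDelta s t M i))" for Y
    using pow_quotient_unique[OF _ _ g] that by blast
  have "is_subrep s t M top_kernel \<and> quot_iso s t M top_kernel (rep_pow (Delta s t i) (dimDelta s t M i))"
    using top_kernel_subrep quotient_by_top_kernel[OF g] by blast
  then show ?thesis using unique top_kernel_filtered[OF F] by blast
qed

end
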